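(* Let $\mathcal{P}$ be a parametrised propositional logic program over a finite alphabet $\Sigma=\Sigma_p\cup\Sigma_d$. If the parametrised well-founded model of $\mathcal{P}$ is exact, i.e. of the form $(\mathcal{A},\mathcal{A})$ for some symbolic interpretation $\mathcal{A}\in L^d_p$, then for every $\Sigma$-interpretation $J$: $J\models_{wf}\mathcal{P}$ if and only if $J\models\mathrm{Th}(\mathcal{A})$.
   Context: A parametrised logic program is a finite set of rules $h\leftarrow l_1\wedge\dots\wedge l_n$ with $h\in\Sigma_d$ and each $l_i$ an atom of $\Sigma$ or its negation; $\varphi_q$ is the disjunction of bodies of rules with head $q$. $L_p$: equivalence classes of propositional formulas over $\Sigma_p$ ordered by entailment; $L^d_p$: maps $\Sigma_d\to L_p$ ordered pointwise. For $\mathcal{S}=(\mathcal{A}_t,\mathcal{A}_p)\in(L^d_p)^2$, $\varphi^{\mathcal{S}}$ is computed by substituting $(\overline q,\overline q)$ for $q\in\Sigma_p$ and $(\mathcal{A}_t(q),\mathcal{A}_p(q))$ for $q\in\Sigma_d$, with $\wedge,\vee$ componentwise and $(\neg\psi)^{\mathcal{S}}=(\overline{\neg\psi_p},\overline{\neg\psi_t})$. $\Psi_{\mathcal{P}}(\mathcal{S})(q)=\varphi_q^{\mathcal{S}}$ and $\mathcal{T}_{\mathcal{P}}(\mathcal{A})(q)=\varphi_q^{(\mathcal{A},\mathcal{A})}$ (common component). For an operator $B$ on $M^2$ (precision order $(x,y)\leq_p(u,v)$ iff $x\leq u,v\leq y$), a partial $B$-stable fixpoint is $(x,y)$ with $x=\mathrm{lfp}(B(\cdot,y)_1)$,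 $y=\mathrm{lfp}(B(x,\cdot)_2)$, and the $B$-well-founded fixpoint is the least precise one. The parametrised well-founded model of $\mathcal{P}$ is the $\Psi_{\mathcal{P}}$-well-founded fixpoint of $\mathcal{T}_{\mathcal{P}}$. $\mathrm{Th}(\mathcal{A})=\bigwedge_{q\in\Sigma_d}(q\leftrightarrow\psi_q)$ with $\psi_q$ a representative of $\mathcal{A}(q)$. For $I\in 2^{\Sigma_p}$, $T^I_{\mathcal{P}}$ is the immediate consequence operator on $2^{\Sigma_d}$ with $\Sigma_p$ fixed to $I$ and $\Psi^I_{\mathcal{P}}$ Fitting's three-valued operator on pairs of $\Sigma_d$-interpretations with $\Sigma_p$ fixed to $I$. $J\models_{wf}\mathcal{P}$ iff $(J\cap\Sigma_d,J\cap\Sigma_d)$ is the $\Psi^{J\cap\Sigma_p}_{\mathcal{P}}$-well-founded fixpoint of $T^{J\cap\Sigma_p}_{\mathcal{P}}$. *)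

theory Defs
  imports Main
begin

datatype 'a form = Atom 'a | Neg "'a form" | Conj "'a form" "'a form"
  | Disj "'a form" "'a form" | Top | Bot

fun atoms :: "'a form \<Rightarrow> 'a set" where
  "atoms (Atom q) = {q}"
| "atoms (Neg f) = atoms f"
| "atoms (Conj f g) = atoms f \<union> atoms g"
| "atoms (Disj f g) = atoms f \<union> atoms g"
| "atoms Top = {}"
| "atoms Bot = {}"

fun sem :: "'a set \<Rightarrow> 'a form \<Rightarrow> bool" where
  "sem I (Atom q) = (q \<in> I)"
| "sem I (Neg f) = (\<not> sem I f)"
| "sem I (Conj f g) = (sem I f \<and> sem I g)"
| "sem I (Disj f g) = (sem I f \<or> sem I g)"
| "sem I Top = True"
| "sem I Bot = False"

definition cls :: "'a set \<Rightarrow> 'a form \<Rightarrow> 'a form set" where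
  "cls SP f = {g. atoms g \<subseteq> SP \<and> (\<forall>I\<subseteq>SP. sem I g = sem I f)}"

definition Lp :: "'a set \<Rightarrow> 'a form set set" where
  "Lp SP = {cls SP f | f. atoms f \<subseteq> SP}"

definition leq_Lp :: "'a set \<Rightarrow> 'a form set \<Rightarrow> 'a form set \<Rightarrow> bool" where
  "leq_Lp SP X Y \<longleftrightarrow> (\<forall>f\<in>X. \<forall>g\<in>Y. \<forall>I\<subseteq>SP. sem I f \<longrightarrow> sem I g)"

definition rep :: "'a form set \<Rightarrow> 'a form" where
  "rep X = (SOME f. f \<in> X)"

definition Ldp :: "'a set \<Rightarrow> 'a set \<Rightarrow> ('a \<Rightarrow> 'a form set) set" where
  "Ldp SP SD = {A. (\<forall>q\<in>SD. A q \<in> Lp SP) \<and> (\<forall>q. q \<notin> SD \<longrightarrow> A q = {})}"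

definition leq_Ldp :: "'a set \<Rightarrow> 'a set \<Rightarrow> ('a \<Rightarrow> 'a form set) \<Rightarrow> ('a \<Rightarrow> 'a form set) \<Rightarrow> bool" where
  "leq_Ldp SP SD A B \<longleftrightarrow> (\<forall>q\<in>SD. leq_Lp SP (A q) (B q))"

(* a literal: atom with polarity (True = positive); a rule: head and body *)
type_synonym 'a rule = "'a \<times> ('a \<times> bool) list"
type_synonym 'a program = "'a rule list"

definition wf_program :: "'a set \<Rightarrow> 'a set \<Rightarrow> 'a program \<Rightarrow> bool" where
  "wf_program SP SD Prog \<longleftrightarrow>
     (\<forall>(h, body) \<in> set Prog. h \<in> SD \<and> (\<forall>(a, b) \<in> set body. a \<in> SP \<union> SD))"

definition lit_form :: "'a \<times> bool \<Rightarrow> 'a form" where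
  "lit_form l = (if snd l then Atom (fst l) else Neg (Atom (fst l)))"

definition body_form :: "('a \<times> bool) list \<Rightarrow> 'a form" where
  "body_form body = foldr (\<lambda>l f. Conj (lit_form l) f) body Top"

definition phi :: "'a program \<Rightarrow> 'a \<Rightarrow> 'a form" where
  "phi Prog q = foldr (\<lambda>r f. Disj (body_form (snd r)) f) (filter (\<lambda>r. fst r = q) Prog) Bot"

fun ev :: "'a set \<Rightarrow> ('a \<Rightarrow> 'a form set) \<times> ('a \<Rightarrow> 'a form set) \<Rightarrow> 'a form \<Rightarrow> 'a form \<times> 'a form" where
  "ev SD S (Atom q) = (if q \<in> SD then (rep (fst S q), rep (snd S q)) else (Atom q, Atom q))"
| "ev SD S (Neg f) = (case ev SD S f of (t, p) \<Rightarrow> (Neg p, Neg t))"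
| "ev SD S (Conj f g) = (case ev SD S f of (t1, p1) \<Rightarrow> case ev SD S g of (t2, p2) \<Rightarrow> (Conj t1 t2, Conj p1 p2))"
| "ev SD S (Disj f g) = (case ev SD S f of (t1, p1) \<Rightarrow> case ev SD S g of (t2, p2) \<Rightarrow> (Disj t1 t2, Disj p1 p2))"
| "ev SD S Top = (Top, Top)"
| "ev SD S Bot = (Bot, Bot)"

definition PsiP :: "'a set \<Rightarrow> 'a set \<Rightarrow> 'a program \<Rightarrow>
    ('a \<Rightarrow> 'a form set) \<times> ('a \<Rightarrow> 'a form set) \<Rightarrow> ('a \<Rightarrow> 'a form set) \<times> ('a \<Rightarrow> 'a form set)" where
  "PsiP SP SD Prog S =
     ((\<lambda>q. if q \<in> SD then cls SP (fst (ev SD S (phi Prog q))) else {}),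
      (\<lambda>q. if q \<in> SD then cls SP (snd (ev SD S (phi Prog q))) else {}))"

definition TP :: "'a set \<Rightarrow> 'a set \<Rightarrow> 'a program \<Rightarrow> ('a \<Rightarrow> 'a form set) \<Rightarrow> ('a \<Rightarrow> 'a form set)" where
  "TP SP SD Prog A = fst (PsiP SP SD Prog (A, A))"

definition is_lfp :: "'m set \<Rightarrow> ('m \<Rightarrow> 'm \<Rightarrow> bool) \<Rightarrow> ('m \<Rightarrow> 'm) \<Rightarrow> 'm \<Rightarrow> bool" where
  "is_lfp C le f x \<longleftrightarrow> x \<in> C \<and> f x = x \<and> (\<forall>y\<in>C. f y = y \<longrightarrow> le x y)"

definition prec_le :: "('m \<Rightarrow> 'm \<Rightarrow> bool) \<Rightarrow> 'm \<times> 'm \<Rightarrow> 'm \<times> 'm \<Rightarrow> bool" where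
  "prec_le le p q \<longleftrightarrow> le (fst p) (fst q) \<and> le (snd q) (snd p)"

definition partial_stable :: "'m set \<Rightarrow> ('m \<Rightarrow> 'm \<Rightarrow> bool) \<Rightarrow> ('m \<times> 'm \<Rightarrow> 'm \<times> 'm) \<Rightarrow> 'm \<times> 'm \<Rightarrow> bool" where
  "partial_stable C le B p \<longleftrightarrow>
     is_lfp C le (\<lambda>x. fst (B (x, snd p))) (fst p) \<and>
     is_lfp C le (\<lambda>y. snd (B (fst p, y))) (snd p)"

definition well_founded_fp :: "'m set \<Rightarrow> ('m \<Rightarrow> 'm \<Rightarrow> bool) \<Rightarrow> ('m \<times> 'm \<Rightarrow> 'm \<times> 'm) \<Rightarrow> 'm \<times> 'm \<Rightarrow> bool" where
  "well_founded_fp C le B p \<longleftrightarrow>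
     partial_stable C le B p \<and> (\<forall>q. partial_stable C le B q \<longrightarrow> prec_le le p q)"

definition param_wf_model :: "'a set \<Rightarrow> 'a set \<Rightarrow> 'a program \<Rightarrow>
    ('a \<Rightarrow> 'a form set) \<times> ('a \<Rightarrow> 'a form set) \<Rightarrow> bool" where
  "param_wf_model SP SD Prog S \<longleftrightarrow> well_founded_fp (Ldp SP SD) (leq_Ldp SP SD) (PsiP SP SD Prog) S"

definition TPI :: "'a set \<Rightarrow> 'a program \<Rightarrow> 'a set \<Rightarrow> 'a set \<Rightarrow> 'a set" where
  "TPI SD Prog I X = {q \<in> SD. sem (I \<union> X) (phi Prog q)}"

(* Fitting's three-valued operator Psi^I_P on pairs (X,Y) (lower, upper) *)
definition PsiPI :: "'a set \<Rightarrow> 'a program \<Rightarrow> 'a set \<Rightarrow> 'a set \<times> 'a set \<Rightarrow> 'a set \<times> 'a set" where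
  "PsiPI SD Prog I XY =
     ({q \<in> SD. \<exists>(h, body) \<in> set Prog. h = q \<and>
         (\<forall>(a, b) \<in> set body. if b then a \<in> I \<union> fst XY else a \<notin> I \<union> snd XY)},
      {q \<in> SD. \<exists>(h, body) \<in> set Prog. h = q \<and>
         (\<forall>(a, b) \<in> set body. if b then a \<in> I \<union> snd XY else a \<notin> I \<union> fst XY)})"

definition wf_models :: "'a set \<Rightarrow> 'a set \<Rightarrow> 'a program \<Rightarrow> 'a set \<Rightarrow> bool" where
  "wf_models SP SD Prog J \<longleftrightarrow>
     well_founded_fp (Pow SD) (\<subseteq>) (PsiPI SD Prog (J \<inter> SP)) (J \<inter> SD, J \<inter> SD)"

(* J |= Th(A), Th(A) = /\_{q in Sigma_d} (q <-> psi_q), psi_q a representative of A(q) *)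
definition models_Th :: "'a set \<Rightarrow> 'a set \<Rightarrow> ('a \<Rightarrow> 'a form set) \<Rightarrow> bool" where
  "models_Th SD J A \<longleftrightarrow> (\<forall>q\<in>SD. (q \<in> J) = sem J (rep (A q)))"

end

theory Submission
  imports Defs
begin

text \<open>
  Since \<open>\<Sigma>\<^sub>p\<close> is finite, a symbolic interpretation is the same as a family of
  \<open>\<Sigma>\<^sub>d\<close>-interpretations indexed by the interpretations \<open>I\<close> of \<open>\<Sigma>\<^sub>p\<close>, ordered
  coordinatewise, and evaluating \<open>\<Psi>\<^sub>P\<close> at \<open>I\<close> gives \<open>\<Psi>\<^sup>I\<^sub>P\<close>. Least fixpoints, partial
  stable fixpoints and hence the well-founded fixpoint are then computed coordinatewise:
  the well-founded fixpoint of \<open>\<Psi>\<^sup>I\<^sub>P\<close> is the parametrised well-founded model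
  evaluated at \<open>I\<close>. If that model is exact, \<open>(\<A>, \<A>)\<close>, its value at \<open>I\<close> is the
  interpretation of \<open>\<Sigma>\<^sub>d\<close> described by \<open>Th(\<A>)\<close>.
\<close>

locale coordinates =
  fixes C :: "'c set" and le :: "'c \<Rightarrow> 'c \<Rightarrow> bool"
    and K :: "'i set" and M :: "'m set" and leM :: "'m \<Rightarrow> 'm \<Rightarrow> bool"
    and coord :: "'c \<Rightarrow> 'i \<Rightarrow> 'm"
  assumes coord_in: "x \<in> C \<Longrightarrow> i \<in> K \<Longrightarrow> coord x i \<in> M"
    and le_iff_coord: "x \<in> C \<Longrightarrow> y \<in> C \<Longrightarrow> le x y \<longleftrightarrow> (\<forall>i\<in>K. leM (coord x i) (coord y i))"
    and coord_inj: "x \<in> C \<Longrightarrow> y \<in> C \<Longrightarrow> (\<forall>i\<in>K. coord x i = coord y i) \<Longrightarrow> x = y"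
    and coord_update: "x \<in> C \<Longrightarrow> i \<in> K \<Longrightarrow> z \<in> M \<Longrightarrow>
      \<exists>w\<in>C. coord w i = z \<and> (\<forall>j\<in>K. j \<noteq> i \<longrightarrow> coord w j = coord x j)"
begin

lemma is_lfp_coordinatewise:
  assumes f_C: "\<And>x. x \<in> C \<Longrightarrow> f x \<in> C"
    and f_coord: "\<And>x i. x \<in> C \<Longrightarrow> i \<in> K \<Longrightarrow> coord (f x) i = g i (coord x i)"
    and x: "x \<in> C"
  shows "is_lfp C le f x \<longleftrightarrow> (\<forall>i\<in>K. is_lfp M leM (g i) (coord x i))"
proof
  assume lfp: "is_lfp C le f x"
  show "\<forall>i\<in>K. is_lfp M leM (g i) (coord x i)"
  proof (intro ballI)
    fix i assume i: "i \<in> K"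
    have fix_x: "g j (coord x j) = coord x j" if "j \<in> K" for j
      using lfp f_coord[OF x that] by (simp add: is_lfp_def)
    have "leM (coord x i) z" if z: "z \<in> M" "g i z = z" for z
    proof -
      obtain w where w: "w \<in> C" "coord w i = z" "\<forall>j\<in>K. j \<noteq> i \<longrightarrow> coord w j = coord x j"
        using coord_update[OF x i z(1)] by blast
      have "f w = w"
        by (rule coord_inj[OF f_C[OF w(1)] w(1)]) (metis f_coord[OF w(1)] w(2,3) z(2) fix_x)
      then have "le x w" using lfp w(1) by (simp add: is_lfp_def)
      then show ?thesis using le_iff_coord[OF x w(1)] i w(2) by blast
    qed
    then show "is_lfp M leM (g i) (coord x i)"
      using coord_in[OF x i] fix_x[OF i] by (simp add: is_lfp_def)
  qed
next
  assume lfps: "\<forall>i\<in>K. is_lfp M leM (g i) (coord x i)"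
  have "f x = x"
    using coord_inj[OF f_C[OF x] x] f_coord[OF x] lfps by (simp add: is_lfp_def)
  moreover have "le x y" if "y \<in> C" "f y = y" for y
    using le_iff_coord[OF x that(1)] lfps f_coord[OF that(1)] coord_in[OF that(1)] that(2)
    by (simp add: is_lfp_def)
  ultimately show "is_lfp C le f x" using x by (simp add: is_lfp_def)
qed

end

locale coordinatewise_operator = coordinates +
  fixes B :: "'c \<times> 'c \<Rightarrow> 'c \<times> 'c" and Bi :: "'i \<Rightarrow> 'm \<times> 'm \<Rightarrow> 'm \<times> 'm"
  assumes B_in: "x \<in> C \<Longrightarrow> y \<in> C \<Longrightarrow> fst (B (x, y)) \<in> C \<and> snd (B (x, y)) \<in> C"
    and B_coord: "x \<in> C \<Longrightarrow> y \<in> C \<Longrightarrow> i \<in> K \<Longrightarrow>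
      map_prod (\<lambda>u. coord u i) (\<lambda>u. coord u i) (B (x, y)) = Bi i (coord x i, coord y i)"
begin

lemma B_coord_fst: "x \<in> C \<Longrightarrow> y \<in> C \<Longrightarrow> i \<in> K \<Longrightarrow>
    coord (fst (B (x, y))) i = fst (Bi i (coord x i, coord y i))"
  using B_coord by (metis fst_map_prod)

lemma B_coord_snd: "x \<in> C \<Longrightarrow> y \<in> C \<Longrightarrow> i \<in> K \<Longrightarrow>
    coord (snd (B (x, y))) i = snd (Bi i (coord x i, coord y i))"
  using B_coord by (metis snd_map_prod)

lemma partial_stable_coordinatewise:
  assumes "x \<in> C" "y \<in> C"
  shows "partial_stable C le B (x, y) \<longleftrightarrow>
    (\<forall>i\<in>K. partial_stable M leM (Bi i) (coord x i, coord y i))"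
proof -
  have "is_lfp C le (\<lambda>u. fst (B (u, y))) x \<longleftrightarrow>
      (\<forall>i\<in>K. is_lfp M leM (\<lambda>u. fst (Bi i (u, coord y i))) (coord x i))"
    using is_lfp_coordinatewise[of "\<lambda>u. fst (B (u, y))"] B_in B_coord_fst assms by simp
  moreover have "is_lfp C le (\<lambda>u. snd (B (x, u))) y \<longleftrightarrow>
      (\<forall>i\<in>K. is_lfp M leM (\<lambda>u. snd (Bi i (coord x i, u))) (coord y i))"
    using is_lfp_coordinatewise[of "\<lambda>u. snd (B (x, u))"] B_in B_coord_snd assms by simp
  ultimately show ?thesis by (auto simp: partial_stable_def)
qed

lemma well_founded_fp_coordinate:
  assumes wf: "well_founded_fp C le B (a, b)" and i: "i \<in> K"
  shows "well_founded_fp M leM (Bi i) (coord a i, coord b i)"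
proof -
  have ps: "partial_stable C le B (a, b)" using wf by (simp add: well_founded_fp_def)
  then have ab: "a \<in> C" "b \<in> C" by (simp_all add: partial_stable_def is_lfp_def)
  have ps_coords: "\<forall>j\<in>K. partial_stable M leM (Bi j) (coord a j, coord b j)"
    using ps partial_stable_coordinatewise[OF ab] by blast
  have "prec_le leM (coord a i, coord b i) (u, v)"
    if uv: "partial_stable M leM (Bi i) (u, v)" for u v
  proof -
    have "u \<in> M" "v \<in> M" using uv by (simp_all add: partial_stable_def is_lfp_def)
    then obtain wu wv where
      wu: "wu \<in> C" "coord wu i = u" "\<forall>j\<in>K. j \<noteq> i \<longrightarrow> coord wu j = coord a j" and
      wv: "wv \<in> C" "coord wv i = v" "\<forall>j\<in>K. j \<noteq> i \<longrightarrow> coord wv j = coord b j"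
      using coord_update[OF ab(1) i] coord_update[OF ab(2) i] by metis
    have "partial_stable C le B (wu, wv)"
      unfolding partial_stable_coordinatewise[OF wu(1) wv(1)]
      using ps_coords uv wu wv by metis
    then have "le a wu" "le wv b"
      using wf by (simp_all add: well_founded_fp_def prec_le_def)
    then show ?thesis
      using le_iff_coord[OF ab(1) wu(1)] le_iff_coord[OF wv(1) ab(2)] wu(2) wv(2) i
      unfolding prec_le_def by auto
  qed
  then show ?thesis
    using ps_coords i by (auto simp: well_founded_fp_def)
qed

end

lemma well_founded_fp_unique:
  fixes p q :: "'m::order \<times> 'm"
  assumes "well_founded_fp C (\<le>) B p" "well_founded_fp C (\<le>) B q"
  shows "p = q"
  using assms unfolding well_founded_fp_def prec_le_def by (metis prod.collapse order_antisym)

lemma sem_restrict: "atoms f \<subseteq> S \<Longrightarrow> sem J f = sem (J \<inter> S) f"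
  by (induction f) auto

declare ev.simps(2-4)[simp del]

lemma ev_Neg [simp]: "ev SD S (Neg f) = (Neg (snd (ev SD S f)), Neg (fst (ev SD S f)))"
  by (simp add: ev.simps split: prod.split)

lemma ev_Conj [simp]: "ev SD S (Conj f g) =
    (Conj (fst (ev SD S f)) (fst (ev SD S g)), Conj (snd (ev SD S f)) (snd (ev SD S g)))"
  by (simp add: ev.simps split: prod.split)

lemma ev_Disj [simp]: "ev SD S (Disj f g) =
    (Disj (fst (ev SD S f)) (fst (ev SD S g)), Disj (snd (ev SD S f)) (snd (ev SD S g)))"
  by (simp add: ev.simps split: prod.split)

lemma snd_ev_swap: "snd (ev SD (X, Y) f) = fst (ev SD (Y, X) f)"
  by (induction f arbitrary: X Y) auto

lemma PsiP_snd_swap: "snd (PsiP SP SD Prog (X, Y)) = fst (PsiP SP SD Prog (Y, X))"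
  unfolding PsiP_def fst_conv snd_conv snd_ev_swap ..

lemma PsiPI_snd_swap: "snd (PsiPI SD Prog I (x, y)) = fst (PsiPI SD Prog I (y, x))"
  by (simp add: PsiPI_def)

lemma sem_rep_cls: "atoms f \<subseteq> SP \<Longrightarrow> I \<subseteq> SP \<Longrightarrow> sem I (rep (cls SP f)) = sem I f"
  unfolding rep_def using someI[of "\<lambda>g. g \<in> cls SP f" f] by (auto simp: cls_def)

lemma rep_in_Lp:
  assumes "X \<in> Lp SP"
  shows "rep X \<in> X"
proof -
  obtain f where "atoms f \<subseteq> SP" "X = cls SP f" using assms unfolding Lp_def by blast
  then have "f \<in> X" by (simp add: cls_def)
  then show ?thesis unfolding rep_def by (rule someI)
qed

lemma mem_Lp_iff:
  assumes "X \<in> Lp SP"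
  shows "f \<in> X \<longleftrightarrow> atoms f \<subseteq> SP \<and> (\<forall>I\<subseteq>SP. sem I f = sem I (rep X))"
proof -
  obtain f0 where "X = cls SP f0" using assms unfolding Lp_def by blast
  then show ?thesis using rep_in_Lp[OF assms] by (auto simp: cls_def)
qed

lemma atoms_rep_Lp: "X \<in> Lp SP \<Longrightarrow> atoms (rep X) \<subseteq> SP"
  using mem_Lp_iff rep_in_Lp by blast

lemma leq_Lp_iff:
  assumes X: "X \<in> Lp SP" and Y: "Y \<in> Lp SP"
  shows "leq_Lp SP X Y \<longleftrightarrow> (\<forall>I\<subseteq>SP. sem I (rep X) \<longrightarrow> sem I (rep Y))"
proof
  assume "leq_Lp SP X Y"
  then show "\<forall>I\<subseteq>SP. sem I (rep X) \<longrightarrow> sem I (rep Y)"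
    using rep_in_Lp[OF X] rep_in_Lp[OF Y] unfolding leq_Lp_def by blast
next
  assume "\<forall>I\<subseteq>SP. sem I (rep X) \<longrightarrow> sem I (rep Y)"
  then show "leq_Lp SP X Y"
    unfolding leq_Lp_def Ball_def mem_Lp_iff[OF X] mem_Lp_iff[OF Y] by simp
qed

definition eval_at :: "'a set \<Rightarrow> 'a set \<Rightarrow> ('a \<Rightarrow> 'a form set) \<Rightarrow> 'a set" where
  "eval_at SD I Z = {q\<in>SD. sem I (rep (Z q))}"

lemma atoms_rep_Ldp: "Z \<in> Ldp SP SD \<Longrightarrow> q \<in> SD \<Longrightarrow> atoms (rep (Z q)) \<subseteq> SP"
  by (simp add: Ldp_def atoms_rep_Lp)

lemma eval_at_subset: "eval_at SD I Z \<subseteq> SD"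
  by (auto simp: eval_at_def)

lemma Ldp_eqI:
  assumes X: "X \<in> Ldp SP SD" and Y: "Y \<in> Ldp SP SD"
    and eq: "\<forall>I\<subseteq>SP. eval_at SD I X = eval_at SD I Y"
  shows "X = Y"
proof
  fix q show "X q = Y q"
  proof (cases "q \<in> SD")
    case True
    then have XY: "X q \<in> Lp SP" "Y q \<in> Lp SP" using X Y by (auto simp: Ldp_def)
    have "\<forall>I\<subseteq>SP. sem I (rep (X q)) = sem I (rep (Y q))"
      using eq True by (auto simp: eval_at_def set_eq_iff)
    then show ?thesis
      unfolding set_eq_iff mem_Lp_iff[OF XY(1)] mem_Lp_iff[OF XY(2)] by simp
  next
    case False
    then show ?thesis using X Y by (simp add: Ldp_def)
  qed
qed

lemma leq_Ldp_iff:
  assumes "X \<in> Ldp SP SD" "Y \<in> Ldp SP SD"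
  shows "leq_Ldp SP SD X Y \<longleftrightarrow> (\<forall>I\<subseteq>SP. eval_at SD I X \<subseteq> eval_at SD I Y)"
proof -
  have "leq_Lp SP (X q) (Y q) \<longleftrightarrow> (\<forall>I\<subseteq>SP. sem I (rep (X q)) \<longrightarrow> sem I (rep (Y q)))"
    if "q \<in> SD" for q
    using assms that by (intro leq_Lp_iff) (simp_all add: Ldp_def)
  then show ?thesis unfolding leq_Ldp_def eval_at_def by auto
qed

definition char_form :: "'a list \<Rightarrow> 'a set \<Rightarrow> 'a form" where
  "char_form xs I = foldr (\<lambda>p f. Conj (if p \<in> I then Atom p else Neg (Atom p)) f) xs Top"

lemma sem_char_form: "sem J (char_form xs I) \<longleftrightarrow> (\<forall>p\<in>set xs. p \<in> J \<longleftrightarrow> p \<in> I)"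
  by (induction xs) (auto simp: char_form_def)

lemma atoms_char_form: "atoms (char_form xs I) \<subseteq> set xs"
  by (induction xs) (auto simp: char_form_def)

lemma Ldp_update_at:
  assumes "finite SP" "Z \<in> Ldp SP SD" "I \<subseteq> SP" "z \<subseteq> SD"
  shows "\<exists>W\<in>Ldp SP SD. eval_at SD I W = z \<and>
    (\<forall>J\<subseteq>SP. J \<noteq> I \<longrightarrow> eval_at SD J W = eval_at SD J Z)"
proof -
  obtain xs where xs: "set xs = SP" using finite_list assms(1) by blast
  define g where "g q = Disj (Conj (char_form xs I) (if q \<in> z then Top else Bot))
    (Conj (Neg (char_form xs I)) (rep (Z q)))" for q
  define W where "W q = (if q \<in> SD then cls SP (g q) else {})" for q
  have atoms_g: "atoms (g q) \<subseteq> SP" if "q \<in> SD" for q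
    using atoms_char_form[of xs I] xs atoms_rep_Ldp[OF assms(2) that] by (auto simp: g_def)
  have W: "W \<in> Ldp SP SD" using atoms_g by (auto simp: W_def Ldp_def Lp_def)
  have char: "J \<subseteq> SP \<Longrightarrow> sem J (char_form xs I) \<longleftrightarrow> J = I" for J
    using assms(3) xs by (auto simp: sem_char_form)
  have eval_W: "J \<subseteq> SP \<Longrightarrow> eval_at SD J W = {q\<in>SD. sem J (g q)}" for J
    using sem_rep_cls[OF atoms_g] by (auto simp: eval_at_def W_def)
  have "eval_at SD I W = z"
    using eval_W[OF assms(3)] char[OF assms(3)] assms(4) by (auto simp: g_def)
  moreover have "eval_at SD J W = eval_at SD J Z" if "J \<subseteq> SP" "J \<noteq> I" for J
    using eval_W[OF that(1)] char[OF that(1)] that(2) by (auto simp: g_def eval_at_def)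
  ultimately show ?thesis using W by blast
qed

lemma Ldp_coordinates:
  "finite SP \<Longrightarrow> coordinates (Ldp SP SD) (leq_Ldp SP SD) (Pow SP) (Pow SD) (\<subseteq>)
    (\<lambda>Z I. eval_at SD I Z)"
  by unfold_locales
    (auto simp: eval_at_subset leq_Ldp_iff Ldp_eqI, meson Ldp_update_at PowD)

lemma sem_ev_lit:
  assumes "SP \<inter> SD = {}" "I \<subseteq> SP" "a \<in> SP \<union> SD"
  shows "sem I (fst (ev SD (X, Y) (lit_form (a, b)))) \<longleftrightarrow>
    (if b then a \<in> I \<union> eval_at SD I X else a \<notin> I \<union> eval_at SD I Y)"
  using assms by (auto simp: lit_form_def eval_at_def)

lemma sem_ev_body:
  assumes "SP \<inter> SD = {}" "I \<subseteq> SP" "\<forall>(a, b)\<in>set body. a \<in> SP \<union> SD"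
  shows "sem I (fst (ev SD (X, Y) (body_form body))) \<longleftrightarrow>
    (\<forall>(a, b)\<in>set body. if b then a \<in> I \<union> eval_at SD I X else a \<notin> I \<union> eval_at SD I Y)"
  using assms(3)
proof (induction body)
  case Nil
  then show ?case by (simp add: body_form_def)
next
  case (Cons l body)
  then show ?case
    using sem_ev_lit[OF assms(1,2), of "fst l" X Y "snd l"]
    by (cases l) (simp add: body_form_def)
qed

lemma sem_ev_phi:
  assumes "SP \<inter> SD = {}" "I \<subseteq> SP" "wf_program SP SD Prog"
  shows "sem I (fst (ev SD (X, Y) (phi Prog q))) \<longleftrightarrow> (\<exists>(h, body)\<in>set Prog. h = q \<and>
    (\<forall>(a, b)\<in>set body. if b then a \<in> I \<union> eval_at SD I X else a \<notin> I \<union> eval_at SD I Y))"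
proof -
  have "sem I (fst (ev SD (X, Y) (foldr (\<lambda>r f. Disj (body_form (snd r)) f) rs Bot)))
      \<longleftrightarrow> (\<exists>r\<in>set rs. sem I (fst (ev SD (X, Y) (body_form (snd r)))))" for rs :: "'a rule list"
    by (induction rs) auto
  moreover have "\<forall>(a, b)\<in>set body. a \<in> SP \<union> SD" if "(h, body) \<in> set Prog" for h body
    using assms(3) that by (fastforce simp: wf_program_def)
  ultimately show ?thesis
    unfolding phi_def using sem_ev_body[OF assms(1,2)] by fastforce
qed

lemma atoms_phi: "wf_program SP SD Prog \<Longrightarrow> atoms (phi Prog q) \<subseteq> SP \<union> SD"
proof -
  have atoms_body: "atoms (body_form body) = fst ` set body" for body :: "('a \<times> bool) list"
    by (induction body) (auto simp: body_form_def lit_form_def)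
  have "atoms (foldr (\<lambda>r f. Disj (body_form (snd r)) f) rs Bot) = (\<Union>r\<in>set rs. fst ` set (snd r))"
    for rs :: "'a rule list"
    by (induction rs) (auto simp: atoms_body)
  then show "wf_program SP SD Prog \<Longrightarrow> atoms (phi Prog q) \<subseteq> SP \<union> SD"
    unfolding phi_def wf_program_def by fastforce
qed

lemma atoms_ev:
  assumes "X \<in> Ldp SP SD" "Y \<in> Ldp SP SD" "atoms f \<subseteq> SP \<union> SD"
  shows "atoms (fst (ev SD (X, Y) f)) \<subseteq> SP \<and> atoms (snd (ev SD (X, Y) f)) \<subseteq> SP"
  using assms(3) by (induction f) (use atoms_rep_Ldp[OF assms(1)] atoms_rep_Ldp[OF assms(2)] in auto)

lemma PsiP_in_Ldp:
  assumes "X \<in> Ldp SP SD" "Y \<in> Ldp SP SD" "wf_program SP SD Prog"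
  shows "fst (PsiP SP SD Prog (X, Y)) \<in> Ldp SP SD"
  using atoms_ev[OF assms(1,2) atoms_phi[OF assms(3)]] by (auto simp: PsiP_def Ldp_def Lp_def)

lemma eval_at_PsiP:
  assumes "SP \<inter> SD = {}" "I \<subseteq> SP" "wf_program SP SD Prog" "X \<in> Ldp SP SD" "Y \<in> Ldp SP SD"
  shows "eval_at SD I (fst (PsiP SP SD Prog (X, Y))) =
    fst (PsiPI SD Prog I (eval_at SD I X, eval_at SD I Y))"
  using sem_rep_cls[OF conjunct1[OF atoms_ev[OF assms(4,5) atoms_phi[OF assms(3)]]] assms(2)]
  by (auto simp: PsiP_def PsiPI_def eval_at_def[of SD I "\<lambda>q. if q \<in> SD then _ q else {}"]
      sem_ev_phi[OF assms(1-3)])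

lemma PsiP_coordinatewise:
  assumes "finite SP" "SP \<inter> SD = {}" "wf_program SP SD Prog"
  shows "coordinatewise_operator (Ldp SP SD) (leq_Ldp SP SD) (Pow SP) (Pow SD) (\<subseteq>)
    (\<lambda>Z I. eval_at SD I Z) (PsiP SP SD Prog) (PsiPI SD Prog)"
  by (intro coordinatewise_operator.intro Ldp_coordinates[OF assms(1)]
      coordinatewise_operator_axioms.intro)
    (auto simp: prod_eq_iff PsiP_snd_swap PsiPI_snd_swap
      PsiP_in_Ldp[OF _ _ assms(3)] eval_at_PsiP[OF assms(2) _ assms(3)])

lemma models_Th_iff_eval_at:
  assumes "A \<in> Ldp SP SD"
  shows "models_Th SD J A \<longleftrightarrow> J \<inter> SD = eval_at SD (J \<inter> SP) A"
proof -
  have "sem J (rep (A q)) = sem (J \<inter> SP) (rep (A q))" if "q \<in> SD" for q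
    using atoms_rep_Ldp[OF assms that] sem_restrict by blast
  then show ?thesis by (auto simp: models_Th_def eval_at_def)
qed

theorem theorem4p11:
  fixes SP SD :: "'a set" and Prog :: "'a program" and A :: "'a \<Rightarrow> 'a form set"
  assumes "finite SP" and "finite SD" and "SP \<inter> SD = {}"
    and "wf_program SP SD Prog"
    and "A \<in> Ldp SP SD"
    and "param_wf_model SP SD Prog (A, A)"
  shows "\<forall>J \<subseteq> SP \<union> SD. wf_models SP SD Prog J \<longleftrightarrow> models_Th SD J A"
proof (intro allI impI)
  fix J
  let ?I = "J \<inter> SP"
  interpret coordinatewise_operator "Ldp SP SD" "leq_Ldp SP SD" "Pow SP" "Pow SD" "(\<subseteq>)"
    "\<lambda>Z I. eval_at SD I Z" "PsiP SP SD Prog" "PsiPI SD Prog"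
    using PsiP_coordinatewise assms(1,3,4) .
  have wf: "well_founded_fp (Pow SD) (\<subseteq>) (PsiPI SD Prog ?I) (eval_at SD ?I A, eval_at SD ?I A)"
    using well_founded_fp_coordinate assms(6) by (simp add: param_wf_model_def)
  then have "wf_models SP SD Prog J \<longleftrightarrow> J \<inter> SD = eval_at SD ?I A"
    unfolding wf_models_def by (auto dest: well_founded_fp_unique[OF wf])
  then show "wf_models SP SD Prog J \<longleftrightarrow> models_Th SD J A"
    using models_Th_iff_eval_at[OF assms(5)] by simp
qed

end
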